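(* Let $\mathcal{C}=\mathcal{I}_i$ be an irreducible $\lambda$-constacyclic code of length $n$ and dimension $k$ over $\mathbb{F}_q$ corresponding to the $q$-cyclotomic coset $C_{1+t\alpha_i}$ (so $k=d_i$). Then $$N_{\langle\rho,M\rangle}(\mathcal{C}^{*})=\frac{(q^k-1)\gcd\big((q-1)(1+t\alpha_i),\,tn\big)}{(q-1)tn}.$$ Moreover, the number of distinct nonzero Hamming weights of $\mathcal{C}$ is at most $N_{\langle\rho,M\rangle}(\mathcal{C}^{*})$, with equality if and only if for any two nonzero codewords $c_1,c_2\in\mathcal{C}$ of the same Hamming weight there exist an integer $j$ and $b\in\mathbb{F}_q^{*}$ with $\rho^{j}(bc_1)=c_2$.
   Context: Standing setup: $q$ is a prime power, $n$ a positive integer with $\gcd(n,q)=1$, $\lambda\in\mathbb{F}_q^{*}$ has multiplicative order $t$ (so $t\mid q-1$). $\mathcal{R}=\mathbb{F}_q[x]/\langle x^n-\lambda\rangle$; vectors in $\mathbb{F}_q^n$ are identified with polynomials of degree $<n$, and a $\lambda$-constacyclic code of length $n$ is an ideal of $\mathcal{R}$. Let $\zeta$ be a primitive $tn$-th root of unity in an extension $\mathbb{F}_{q^m}$ with $\zeta^n=\lambda$. The set $\mathcal{S}=\{1+ti:0\le i\le n-1\}$ (residues mod $tn$) is partitioned into the distinct $q$-cyclotomic cosets modulo $tn$, $C_{1+t\alpha_j}=\{(1+t\alpha_j)q^{h}\bmod tn: h\ge 0\}$, $j=0,\dots,s$, with $0=\alpha_0<\dots<\alpha_s\le n-1$ and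 $d_j=|C_{1+t\alpha_j}|$. Let $m_j(x)=\prod_{h\in C_{1+t\alpha_j}}(x-\zeta^{h})$, and let $\mathcal{I}_j$ be the ideal of $\mathcal{R}$ generated by $(x^n-\lambda)/m_j(x)$ (the irreducible $\lambda$-constacyclic code of dimension $d_j$ corresponding to $C_{1+t\alpha_j}$). The cyclic shift $\rho$ is $\rho(c(x))=xc(x)$ in $\mathcal{R}$, i.e. $(c_0,\dots,c_{n-1})\mapsto(\lambda c_{n-1},c_0,\dots,c_{n-2})$; $\langle\rho\rangle$ has order $tn$. For $b\in\mathbb{F}_q^{*}$, $\sigma_b(c)=bc$ (scalar multiplication), $M=\{\sigma_b:b\in\mathbb{F}_q^{*}\}$, and $\langle\rho,M\rangle$ is the group of $\mathbb{F}_q$-linear maps generated by $\rho$ and $M$ (it equals $\langle\rho\rangle\times M$, of order $tn(q-1)$). $\mathcal{C}^{*}=\mathcal{C}\setminus\{0\}$, and $N_G(X)$ is the number of orbits of a group $G$ acting on $X$. *)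

theory Defs
  imports "HOL-Computational_Algebra.Polynomial"
begin

text \<open>Codewords of length n are identified with polynomials of degree < n.
  The ring R = F_q[x]/(x^n - lambda) is represented by remainders modulo x^n - lambda.\<close>

definition xn_minus :: "nat \<Rightarrow> 'a::field \<Rightarrow> 'a poly" where
  "xn_minus n lam = monom 1 n - [:lam:]"

definition cshift :: "nat \<Rightarrow> 'a::field \<Rightarrow> 'a poly \<Rightarrow> 'a poly" where
  "cshift n lam c = (monom 1 1 * c) mod xn_minus n lam"

definition hweight :: "'a::zero poly \<Rightarrow> nat" where
  "hweight c = card {i. coeff c i \<noteq> 0}"

definition cyc_coset :: "nat \<Rightarrow> nat \<Rightarrow> nat \<Rightarrow> nat set" where
  "cyc_coset q N a = {(a * q ^ h) mod N | h. True}"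

definition coset_poly :: "'b::field \<Rightarrow> nat set \<Rightarrow> 'b poly" where
  "coset_poly \<zeta> C = (\<Prod>h\<in>C. [:- (\<zeta> ^ h), 1:])"

text \<open>The irreducible constacyclic code: the ideal of R generated by (x^n - lambda)/m(x).\<close>
definition irr_code ::
  "('a::field \<Rightarrow> 'b::field) \<Rightarrow> nat \<Rightarrow> 'a \<Rightarrow> 'b \<Rightarrow> nat set \<Rightarrow> 'a poly set" where
  "irr_code emb n lam \<zeta> C =
     {c. \<exists>a :: 'a poly. map_poly emb c =
        (map_poly emb a * (map_poly emb (xn_minus n lam) div coset_poly \<zeta> C))
          mod map_poly emb (xn_minus n lam)}"

definition rhoM_orbit :: "nat \<Rightarrow> 'a::field \<Rightarrow> 'a poly \<Rightarrow> 'a poly set" where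
  "rhoM_orbit n lam c = {(cshift n lam ^^ j) (smult b c) | j b. b \<noteq> 0}"

definition num_orbits :: "nat \<Rightarrow> 'a::field \<Rightarrow> 'a poly set \<Rightarrow> nat" where
  "num_orbits n lam X = card (rhoM_orbit n lam ` X)"

end

theory Submission
  imports "Berlekamp_Zassenhaus.Finite_Field" Defs
begin

(* Evaluation at \<beta> = \<zeta>^(1 + t\<alpha>) maps the code injectively into the extension field: every
  codeword is b g with deg b < k, and \<beta> is a root of no nonzero polynomial of degree < k over
  F_q, since its k conjugates \<beta>^(q^h) are the roots \<zeta>^c, c \<in> C_{1+t\<alpha>}.  Under evaluation \<rho>
  becomes multiplication by \<beta> and \<sigma>_b multiplication by b, so the <\<rho>,M>-orbit of c is carried
  onto the coset H c(\<beta>) of the group H = <\<beta>> F_q^*.  Hence all orbits in C^* have |H| elements.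
  Counting pairs (j, b) with j < tn and b \<noteq> 0 gives |H| gcd((q-1)(1+t\<alpha>), tn) = tn(q-1), because
  \<beta>^j lies in F_q exactly when tn divides j (q-1)(1+t\<alpha>).  Finally, Hamming weight is constant on
  orbits, which gives the inequality and the equality criterion. *)

section \<open>Finite fields and the Frobenius map\<close>

(* The library's finite_field_power_card_eq_same needs the sort finite_field, which a type
  variable of sort {finite, field} is not known to have. *)
lemma finite_field_power_card_minus_one:
  fixes x :: "'a::{finite,field}"
  assumes "x \<noteq> 0"
  shows "x ^ (CARD('a) - 1) = 1"
proof -
  let ?U = "UNIV - {0::'a}"
  have "(\<Prod>y\<in>?U. x * y) = \<Prod>?U"
    by (rule prod.reindex_bij_witness[of _ "\<lambda>y. y / x" "\<lambda>y. x * y"]) (use assms in auto)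
  then have "x ^ card ?U * \<Prod>?U = 1 * \<Prod>?U"
    by (simp add: prod.distrib)
  moreover have "\<Prod>?U \<noteq> 0"
    by simp
  ultimately show ?thesis
    by (simp add: card_Diff_singleton)
qed

lemma finite_field_power_card: "(x::'a::{finite,field}) ^ CARD('a) = x"
proof (cases "x = 0")
  case False
  have "x ^ CARD('a) = x * x ^ (CARD('a) - 1)"
    by (simp add: power_eq_if)
  then show ?thesis
    using finite_field_power_card_minus_one[OF False] by simp
qed simp

lemma dvd_add_diff_lessThan_imp_eq:
  fixes j1 j2 p :: nat
  assumes dvd: "p dvd j1 + (p - j2)" and j: "j1 < p" "j2 < p"
  shows "j1 = j2"
proof -
  obtain m where m: "j1 + (p - j2) = p * m"
    using dvd by (rule dvdE)
  have "p * m < p * 2" "p * 0 < p * m"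
    using j by (simp_all flip: m)
  then have "m = 1"
    by (simp only: mult_less_cancel1) linarith
  then show ?thesis
    using m j by simp
qed

lemma of_nat_mult_mem_add_closed:
  assumes "0 \<in> V" "\<forall>v\<in>V. \<forall>w\<in>V. v + w \<in> V" "v \<in> V"
  shows "of_nat j * v \<in> V"
  by (induction j) (simp_all add: assms distrib_right)

lemma diff_mem_add_closed:
  fixes V :: "'a::ring_1 set"
  assumes "0 < CHAR('a)" "0 \<in> V" "\<forall>v\<in>V. \<forall>w\<in>V. v + w \<in> V" "v \<in> V" "w \<in> V"
  shows "v - w \<in> V"
proof -
  have eq: "v - w = v + of_nat (CHAR('a) - 1) * w"
    using assms(1) by (simp add: of_nat_diff)
  have "of_nat (CHAR('a) - 1) * w \<in> V"
    by (rule of_nat_mult_mem_add_closed[OF assms(2,3,5)])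
  then show ?thesis
    unfolding eq using assms(3,4) by blast
qed

lemma mem_add_closed_if_of_nat_mult_mem:
  fixes V :: "'a::ring_1 set"
  assumes p: "prime CHAR('a)" and V: "0 \<in> V" "\<forall>v\<in>V. \<forall>w\<in>V. v + w \<in> V"
    and x: "of_nat d * x \<in> V" and d: "\<not> CHAR('a) dvd d"
  shows "x \<in> V"
proof -
  have "coprime d CHAR('a)"
    using p d by (metis prime_imp_coprime coprime_commute)
  then obtain u where "[d * u = 1] (mod CHAR('a))"
    using cong_solve_coprime_nat by auto
  then have "of_nat (d * u) = (of_nat 1 :: 'a)"
    unfolding of_nat_eq_iff_cong_CHAR by simp
  moreover have "of_nat u * (of_nat d * x) = of_nat (d * u) * x"
    by (simp only: mult.assoc[symmetric] of_nat_mult[symmetric] mult.commute[of u d])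
  ultimately show ?thesis
    using of_nat_mult_mem_add_closed[OF V x, of u] by simp
qed

(* V' = V + {j x | j < CHAR('a)}; the sum is direct because x \<notin> V and every j with
  0 < j < CHAR('a) is invertible modulo the characteristic. *)
lemma add_closed_insert_extension:
  fixes V :: "'a::ring_1 set"
  assumes p: "prime CHAR('a)"
    and V: "0 \<in> V" "\<forall>v\<in>V. \<forall>w\<in>V. v + w \<in> V" and x: "x \<notin> V"
  obtains V' where "insert x V \<subseteq> V'" "\<forall>v\<in>V'. \<forall>w\<in>V'. v + w \<in> V'" "card V' = CHAR('a) * card V"
proof -
  let ?p = "CHAR('a)"
  let ?f = "\<lambda>(v, j). v + of_nat j * x"
  have p_gt1: "1 < ?p"
    using p by (rule prime_gt_1_nat)
  have "inj_on ?f (V \<times> {..<?p})"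
  proof (rule inj_onI, clarsimp)
    fix v1 j1 v2 j2
    assume in_V: "v1 \<in> V" "v2 \<in> V" and j: "j1 < ?p" "j2 < ?p"
      and eq: "v1 + of_nat j1 * x = v2 + of_nat j2 * x"
    have "of_nat (j1 + (?p - j2)) * x = v2 - v1"
      using eq j by (simp add: algebra_simps)
    also have "\<dots> \<in> V"
      using p_gt1 V in_V by (intro diff_mem_add_closed) simp_all
    finally have "?p dvd j1 + (?p - j2)"
      using mem_add_closed_if_of_nat_mult_mem[OF p V] x by blast
    then have "j1 = j2"
      using j by (rule dvd_add_diff_lessThan_imp_eq)
    then show "v1 = v2 \<and> j1 = j2"
      using eq by simp
  qed
  then have "card (?f ` (V \<times> {..<?p})) = ?p * card V"
    by (simp add: card_image card_cartesian_product)
  moreover have "insert x V \<subseteq> ?f ` (V \<times> {..<?p})"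
  proof -
    have "?f ` (V \<times> {0}) \<subseteq> ?f ` (V \<times> {..<?p})"
      using p_gt1 by (intro image_mono) auto
    moreover have "x \<in> ?f ` (V \<times> {..<?p})"
      using V(1) p_gt1 by (intro image_eqI[where x = "(0, 1)"]) auto
    moreover have "?f ` (V \<times> {0}) = V"
      by force
    ultimately show ?thesis
      by simp
  qed
  moreover have "v + w \<in> ?f ` (V \<times> {..<?p})"
    if vw: "v \<in> ?f ` (V \<times> {..<?p})" "w \<in> ?f ` (V \<times> {..<?p})" for v w
  proof -
    obtain v1 j1 v2 j2 where v: "v = v1 + of_nat j1 * x" and w: "w = v2 + of_nat j2 * x"
      and in_V: "v1 \<in> V" "v2 \<in> V"
      using vw by auto
    have "v + w = ?f (v1 + v2, (j1 + j2) mod ?p)"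
      by (simp add: v w algebra_simps)
    moreover have "(v1 + v2, (j1 + j2) mod ?p) \<in> V \<times> {..<?p}"
      using p_gt1 in_V V(2) by simp
    ultimately show ?thesis
      by (rule image_eqI)
  qed
  ultimately show ?thesis
    by (intro that[of "?f ` (V \<times> {..<?p})"]) auto
qed

lemma card_CHAR_power:
  assumes p: "prime CHAR('a::{finite,ring_1})"
  shows "\<exists>r. CARD('a) = CHAR('a) ^ r"
proof -
  have "\<exists>r. CARD('a) = CHAR('a) ^ r * card V"
    if "0 \<in> V" "\<forall>v\<in>V. \<forall>w\<in>V. v + w \<in> V" for V :: "'a set"
    using that
  proof (induction "card (- V)" arbitrary: V rule: less_induct)
    case less
    show ?case
    proof (cases "V = UNIV")
      case True
      then show ?thesis
        by (intro exI[of _ 0]) simp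
    next
      case False
      then obtain x where "x \<notin> V"
        by blast
      obtain V' where V': "insert x V \<subseteq> V'" "\<forall>v\<in>V'. \<forall>w\<in>V'. v + w \<in> V'"
        and card_V': "card V' = CHAR('a) * card V"
        using add_closed_insert_extension[OF p less.prems \<open>x \<notin> V\<close>] .
      have "- V' \<subset> - V"
        using V' \<open>x \<notin> V\<close> by blast
      then have "card (- V') < card (- V)"
        by (simp add: psubset_card_mono)
      moreover have "0 \<in> V'"
        using V' less.prems(1) by blast
      ultimately obtain r where "CARD('a) = CHAR('a) ^ r * card V'"
        using less.hyps V'(2) by blast
      then show ?thesis
        using card_V' by (intro exI[of _ "Suc r"]) simp
    qed
  qed
  from this[of "{0}"] show ?thesis
    by simp
qed

lemma card_finite_field_CHAR_power: "\<exists>r. CARD('a::{finite,field}) = CHAR('a) ^ r"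
  by (rule card_CHAR_power) (simp add: prime_CHAR_semidom finite_imp_CHAR_pos)

lemma two_le_card_field: "2 \<le> CARD('a::{finite,field})"
proof -
  have "card {0::'a, 1} \<le> CARD('a)"
    by (rule card_mono) auto
  then show ?thesis
    by simp
qed

lemma CHAR_field_hom:
  fixes emb :: "'a::field \<Rightarrow> 'b::field"
  assumes "field_hom emb"
  shows "CHAR('b) = CHAR('a)"
proof -
  interpret field_hom emb
    by fact
  show ?thesis
  proof (rule CHAR_eqI)
    show "of_nat CHAR('a) = (0::'b)"
      by (metis hom_of_nat hom_zero of_nat_CHAR)
  next
    fix j
    assume "of_nat j = (0::'b)"
    then have "of_nat j = (0::'a)"
      by (simp flip: hom_of_nat)
    then show "CHAR('a) dvd j"
      by (simp add: of_nat_eq_0_iff_char_dvd)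
  qed
qed

lemma frobenius_comm_ring_hom:
  fixes emb :: "'a::{finite,field} \<Rightarrow> 'b::field"
  assumes "field_hom emb"
  shows "comm_ring_hom (\<lambda>y::'b. y ^ CARD('a))"
proof -
  obtain r where r: "CARD('a) = CHAR('b) ^ r"
    using card_finite_field_CHAR_power CHAR_field_hom[OF assms] by metis
  have "prime CHAR('b)"
    using CHAR_field_hom[OF assms] by (simp add: prime_CHAR_semidom finite_imp_CHAR_pos)
  then show ?thesis
    by unfold_locales (simp_all add: freshmans_dream'[OF _ r] power_mult_distrib)
qed

lemma map_poly_frobenius_field_hom:
  fixes emb :: "'a::{finite,field} \<Rightarrow> 'b::field"
  assumes "field_hom emb"
  shows "map_poly (\<lambda>y. y ^ CARD('a)) (map_poly emb c) = map_poly emb c"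
proof -
  interpret field_hom emb
    by fact
  show ?thesis
    by (rule map_poly_idI) (auto simp: coeffs_map_poly finite_field_power_card simp flip: hom_power)
qed

lemma poly_map_poly_frobenius:
  fixes emb :: "'a::{finite,field} \<Rightarrow> 'b::field"
  assumes "field_hom emb"
  shows "poly (map_poly emb c) (z ^ CARD('a)) = poly (map_poly emb c) z ^ CARD('a)"
proof -
  interpret frob: comm_ring_hom "\<lambda>y::'b. y ^ CARD('a)"
    by (rule frobenius_comm_ring_hom[OF assms])
  show ?thesis
    using frob.poly_map_poly[of "map_poly emb c" z] by (simp add: map_poly_frobenius_field_hom[OF assms])
qed

lemma poly_map_poly_frobenius_power:
  fixes emb :: "'a::{finite,field} \<Rightarrow> 'b::field"
  assumes "field_hom emb"
  shows "poly (map_poly emb c) (z ^ CARD('a) ^ h) = poly (map_poly emb c) z ^ CARD('a) ^ h"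
proof (induction h)
  case (Suc h)
  have "z ^ CARD('a) ^ Suc h = (z ^ CARD('a) ^ h) ^ CARD('a)"
    by (simp only: power_Suc2 power_mult)
  then have "poly (map_poly emb c) (z ^ CARD('a) ^ Suc h)
      = poly (map_poly emb c) (z ^ CARD('a) ^ h) ^ CARD('a)"
    by (simp only: poly_map_poly_frobenius[OF assms])
  also have "\<dots> = poly (map_poly emb c) z ^ CARD('a) ^ Suc h"
    by (simp only: Suc.IH power_Suc2 power_mult)
  finally show ?case .
qed simp

lemma range_field_hom:
  fixes emb :: "'a::{finite,field} \<Rightarrow> 'b::field"
  assumes "field_hom emb"
  shows "range emb = {y. y ^ CARD('a) = y}"
proof -
  interpret field_hom emb
    by fact
  let ?P = "monom 1 CARD('a) - [:0, 1:] :: 'b poly"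
  have q: "2 \<le> CARD('a)"
    by (rule two_le_card_field)
  have "coeff ?P CARD('a) = 1"
    using q by (simp add: coeff_pCons split: nat.split)
  then have "?P \<noteq> 0"
    by (metis coeff_0 zero_neq_one)
  have roots: "{y. y ^ CARD('a) = y} = {y. poly ?P y = 0}"
    by (simp add: poly_monom)
  have "degree ?P \<le> CARD('a)"
    using q by (intro degree_diff_le) (simp_all add: degree_monom_le)
  then have "card {y. poly ?P y = 0} \<le> CARD('a)"
    using card_poly_roots_bound[OF \<open>?P \<noteq> 0\<close>] by linarith
  moreover have "card (range emb) = CARD('a)"
    by (simp add: card_image inj_f)
  moreover have "range emb \<subseteq> {y. y ^ CARD('a) = y}"
    by (auto simp: finite_field_power_card simp flip: hom_power)
  ultimately show ?thesis
    unfolding roots using poly_roots_finite[OF \<open>?P \<noteq> 0\<close>] by (metis card_seteq)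
qed

lemma card_lessThan_dvd_mult:
  fixes N c :: nat
  assumes "0 < N"
  shows "card {i. i < N \<and> N dvd i * c} = gcd c N"
proof -
  define g where "g = gcd c N"
  define N' where "N' = N div g"
  have "0 < g"
    using assms by (simp add: g_def)
  have N: "N = N' * g" and c: "c = c div g * g"
    by (simp_all add: N'_def g_def)
  have "coprime N' (c div g)"
    using div_gcd_coprime[of N c] assms by (simp add: N'_def g_def gcd.commute coprime_commute)
  then have dvd_iff: "N dvd i * c \<longleftrightarrow> N' dvd i" for i
    using \<open>0 < g\<close> by (subst N, subst c) (simp add: coprime_dvd_mult_left_iff)
  have "0 < N'"
    using N assms by simp
  have "{i. i < N \<and> N dvd i * c} = (\<lambda>s. N' * s) ` {..<g}"
  proof (intro equalityI subsetI)
    fix i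
    assume i: "i \<in> {i. i < N \<and> N dvd i * c}"
    then obtain s where s: "i = N' * s"
      using dvd_iff by auto
    then have "s < g"
      using i N \<open>0 < N'\<close> by simp
    then show "i \<in> (\<lambda>s. N' * s) ` {..<g}"
      using s by (intro image_eqI[of _ _ s]) auto
  next
    fix i
    assume "i \<in> (\<lambda>s. N' * s) ` {..<g}"
    then obtain s where "s < g" "i = N' * s"
      by blast
    then have "i < N" "N' dvd i"
      using N \<open>0 < N'\<close> by simp_all
    then show "i \<in> {i. i < N \<and> N dvd i * c}"
      using dvd_iff by simp
  qed
  then show ?thesis
    using \<open>0 < N'\<close> by (simp add: card_image inj_on_def g_def)
qed

lemma card_degree_le: "card {p :: 'a::{finite,zero} poly. degree p \<le> k} = CARD('a) ^ Suc k"
proof (induction k)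
  case 0
  have "{p :: 'a poly. degree p \<le> 0} = range (\<lambda>a. [:a:])"
    by (auto elim: degree_eq_zeroE)
  then show ?case
    by (simp add: card_image inj_on_def)
next
  case (Suc k)
  have "{p :: 'a poly. degree p \<le> Suc k} = (\<lambda>(a, p). pCons a p) ` (UNIV \<times> {p. degree p \<le> k})"
  proof (intro equalityI subsetI)
    fix p :: "'a poly"
    assume "p \<in> {p. degree p \<le> Suc k}"
    then show "p \<in> (\<lambda>(a, p). pCons a p) ` (UNIV \<times> {p. degree p \<le> k})"
      by (cases p) (auto split: if_splits)
  qed (auto intro: order.trans[OF degree_pCons_le])
  moreover have "inj_on (\<lambda>(a, p). pCons a p) (UNIV \<times> {p :: 'a poly. degree p \<le> k})"
    by (auto simp: inj_on_def)
  ultimately show ?case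
    using Suc.IH by (simp add: card_image card_cartesian_product)
qed

lemma card_degree_less:
  assumes "0 < k"
  shows "card {p :: 'a::{finite,zero} poly. degree p < k} = CARD('a) ^ k"
  using card_degree_le[of "k - 1", where 'a = 'a] assms by (simp add: less_Suc_eq_le[symmetric])

lemma cyc_coset_subset_lessThan: "0 < N \<Longrightarrow> cyc_coset q N a \<subseteq> {..<N}"
  unfolding cyc_coset_def by auto

lemma mod_in_cyc_coset: "a mod N \<in> cyc_coset q N a"
  unfolding cyc_coset_def by (auto intro: exI[of _ 0])

lemma cyc_coset_mult_closed:
  assumes "c \<in> cyc_coset q N a"
  shows "c * q mod N \<in> cyc_coset q N a"
proof -
  obtain h where "c = a * q ^ h mod N"
    using assms unfolding cyc_coset_def by blast
  then have "c * q mod N = a * q ^ h * q mod N"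
    by (simp add: mod_mult_left_eq)
  also have "\<dots> = a * q ^ Suc h mod N"
    by (simp only: power_Suc2 mult.assoc)
  finally have "c * q mod N = a * q ^ Suc h mod N" .
  then show ?thesis
    unfolding cyc_coset_def by blast
qed

lemma bij_betw_cyc_coset_mult:
  assumes "coprime q N" "0 < N"
  shows "bij_betw (\<lambda>c. c * q mod N) (cyc_coset q N a) (cyc_coset q N a)"
proof -
  have inj: "inj_on (\<lambda>c. c * q mod N) (cyc_coset q N a)"
  proof (rule inj_onI)
    fix c d
    assume cd: "c \<in> cyc_coset q N a" "d \<in> cyc_coset q N a" and "c * q mod N = d * q mod N"
    then have "[c = d] (mod N)"
      using assms(1) by (simp add: cong_def[symmetric] cong_mult_rcancel_nat)
    moreover have "c < N" "d < N"
      using cd cyc_coset_subset_lessThan[OF assms(2)] by auto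
    ultimately show "c = d"
      by (simp add: cong_def)
  qed
  have "finite (cyc_coset q N a)"
    using cyc_coset_subset_lessThan[OF assms(2)] by (rule finite_subset) simp
  moreover have "(\<lambda>c. c * q mod N) ` cyc_coset q N a \<subseteq> cyc_coset q N a"
    using cyc_coset_mult_closed by blast
  ultimately have "(\<lambda>c. c * q mod N) ` cyc_coset q N a = cyc_coset q N a"
    using inj by (rule endo_inj_surj)
  then show ?thesis
    using inj by (simp add: bij_betw_def)
qed

lemma cyc_coset_cong:
  assumes "c \<in> cyc_coset q N a" "t dvd N" "[q = 1] (mod t)"
  shows "[c = a] (mod t)"
proof -
  obtain h where "c = a * q ^ h mod N"
    using assms(1) unfolding cyc_coset_def by blast
  then have "[c = a * q ^ h] (mod t)"
    using assms(2) by (simp add: cong_def mod_mod_cancel)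
  also have "[a * q ^ h = a * 1 ^ h] (mod t)"
    using assms(3) by (intro cong_mult cong_pow cong_refl)
  finally show ?thesis
    by simp
qed

lemma card_eq_card_image_mult_fiber:
  assumes "finite D" and fiber: "\<And>y. y \<in> f ` D \<Longrightarrow> card {x \<in> D. f x = y} = s"
  shows "card D = card (f ` D) * s"
proof -
  have "D = (\<Union>y\<in>f ` D. {x \<in> D. f x = y})"
    by blast
  also have "card \<dots> = (\<Sum>y\<in>f ` D. card {x \<in> D. f x = y})"
    using assms(1) by (intro card_UN_disjoint) auto
  also have "\<dots> = card (f ` D) * s"
    using fiber by simp
  finally show ?thesis .
qed

lemma image_eq_image_classes:
  assumes self: "\<And>x. x \<in> Y \<Longrightarrow> x \<in> cls x"
    and const: "\<And>x y. x \<in> Y \<Longrightarrow> y \<in> cls x \<Longrightarrow> f y = f x"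
  shows "f ` Y = (\<lambda>S. f (SOME x. x \<in> S)) ` cls ` Y"
proof -
  have "f (SOME z. z \<in> cls x) = f x" if "x \<in> Y" for x
    using someI[of "\<lambda>z. z \<in> cls x", OF self[OF that]] const[OF that] by simp
  then show ?thesis
    by (simp add: image_image cong: image_cong)
qed

lemma card_image_le_card_classes:
  assumes "finite Y"
    and "\<And>x. x \<in> Y \<Longrightarrow> x \<in> cls x"
    and "\<And>x y. x \<in> Y \<Longrightarrow> y \<in> cls x \<Longrightarrow> f y = f x"
  shows "card (f ` Y) \<le> card (cls ` Y)"
proof -
  have "f ` Y = (\<lambda>S. f (SOME x. x \<in> S)) ` cls ` Y"
    using assms(2,3) by (rule image_eq_image_classes)
  then show ?thesis
    using assms(1) by (simp add: card_image_le)
qed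

lemma card_image_eq_card_classes_iff:
  assumes "finite Y"
    and self: "\<And>x. x \<in> Y \<Longrightarrow> x \<in> cls x"
    and const: "\<And>x y. x \<in> Y \<Longrightarrow> y \<in> cls x \<Longrightarrow> f y = f x"
    and classes: "\<And>x y. x \<in> Y \<Longrightarrow> y \<in> Y \<Longrightarrow> y \<in> cls x \<Longrightarrow> cls y = cls x"
  shows "card (f ` Y) = card (cls ` Y) \<longleftrightarrow> (\<forall>x\<in>Y. \<forall>y\<in>Y. f x = f y \<longrightarrow> y \<in> cls x)"
proof -
  define g where "g = (\<lambda>S. f (SOME x. x \<in> S))"
  have g: "g (cls x) = f x" if "x \<in> Y" for x
    unfolding g_def using someI[of "\<lambda>z. z \<in> cls x", OF self[OF that]] const[OF that] by simp
  have "f ` Y = g ` cls ` Y"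
    unfolding g_def using self const by (rule image_eq_image_classes)
  then have "card (f ` Y) = card (cls ` Y) \<longleftrightarrow> inj_on g (cls ` Y)"
    using \<open>finite Y\<close> by (simp add: inj_on_iff_eq_card)
  also have "\<dots> \<longleftrightarrow> (\<forall>x\<in>Y. \<forall>y\<in>Y. f x = f y \<longrightarrow> y \<in> cls x)"
  proof
    assume inj: "inj_on g (cls ` Y)"
    show "\<forall>x\<in>Y. \<forall>y\<in>Y. f x = f y \<longrightarrow> y \<in> cls x"
    proof (intro ballI impI)
      fix x y
      assume xy: "x \<in> Y" "y \<in> Y" and "f x = f y"
      then have "cls x = cls y"
        using g by (intro inj_onD[OF inj]) simp_all
      then show "y \<in> cls x"
        using self[OF xy(2)] by simp
    qed
  next
    assume same: "\<forall>x\<in>Y. \<forall>y\<in>Y. f x = f y \<longrightarrow> y \<in> cls x"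
    show "inj_on g (cls ` Y)"
    proof (rule inj_onI)
      fix S T
      assume "S \<in> cls ` Y" "T \<in> cls ` Y" and eq: "g S = g T"
      then obtain x y where xy: "x \<in> Y" "y \<in> Y" and "S = cls x" "T = cls y"
        by blast
      moreover have "y \<in> cls x"
        using same eq xy g \<open>S = cls x\<close> \<open>T = cls y\<close> by simp
      ultimately show "S = T"
        using classes[OF xy] by simp
    qed
  qed
  finally show ?thesis .
qed

section \<open>Constacyclic shift and Hamming weight\<close>

lemma self_in_rhoM_orbit: "c \<in> rhoM_orbit n lam c"
  unfolding rhoM_orbit_def by (intro CollectI exI[of _ 0] exI[of _ 1]) simp

lemma mem_rhoM_orbit_iff:
  "d \<in> rhoM_orbit n lam c \<longleftrightarrow> (\<exists>j b. b \<noteq> 0 \<and> (cshift n lam ^^ j) (smult b c) = d)"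
  unfolding rhoM_orbit_def by blast

lemma hweight_smult: "(b::'a::idom) \<noteq> 0 \<Longrightarrow> hweight (smult b c) = hweight c"
  by (simp add: hweight_def)

lemma degree_xn_minus:
  assumes "0 < n"
  shows "degree (xn_minus n (lam::'a::field)) = n"
proof -
  have "xn_minus n lam = monom 1 n + [:- lam:]"
    by (rule poly_eqI) (simp add: xn_minus_def coeff_pCons split: nat.split)
  then show ?thesis
    using assms degree_add_eq_left[of "[:- lam:]" "monom 1 n"] by (simp add: degree_monom_eq)
qed

lemma coeff_cshift:
  assumes n: "0 < n" and c: "degree c < n"
  shows "coeff (cshift n lam c) i =
    (if i = 0 then lam * coeff c (n - 1) else if i < n then coeff c (i - 1) else 0)"
proof -
  define a where "a = coeff c (n - 1)"
  define d where "d = pCons 0 c - smult a (xn_minus n lam)"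
  have coeff_d: "coeff d i = (if i = 0 then lam * a else if i < n then coeff c (i - 1) else 0)" for i
    using n c by (cases i) (auto simp: d_def a_def xn_minus_def coeff_eq_0 coeff_monom)
  have "degree d < n"
  proof -
    have "degree d \<le> n - 1"
      by (rule degree_le) (auto simp: coeff_d)
    then show ?thesis
      using n by linarith
  qed
  have "monom 1 1 * c = d + xn_minus n lam * [:a:]"
    by (simp add: d_def monom_Suc)
  then have "cshift n lam c = (d + xn_minus n lam * [:a:]) mod xn_minus n lam"
    by (simp only: cshift_def)
  also have "\<dots> = d mod xn_minus n lam"
    by (rule mod_mult_self2)
  also have "\<dots> = d"
    using \<open>degree d < n\<close> n by (simp add: mod_poly_less degree_xn_minus)
  finally have "cshift n lam c = d" .
  then show ?thesis
    by (simp add: coeff_d a_def)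
qed

lemma hweight_cshift:
  assumes lam: "lam \<noteq> 0" and n: "0 < n" and c: "degree c < n"
  shows "hweight (cshift n lam c) = hweight c"
proof -
  let ?S = "{i. coeff c i \<noteq> 0}" and ?S' = "{i. coeff (cshift n lam c) i \<noteq> 0}"
  let ?\<sigma> = "\<lambda>i. Suc i mod n"
  have S: "?S \<subseteq> {..<n}"
    using c by (auto intro: coeff_eq_0 simp: not_less[symmetric])
  have \<sigma>: "coeff (cshift n lam c) (?\<sigma> i) \<noteq> 0 \<longleftrightarrow> coeff c i \<noteq> 0" if "i < n" for i
  proof (cases "Suc i < n")
    case False
    then have "Suc i = n"
      using that by simp
    then have "i = n - 1" "?\<sigma> i = 0"
      by auto
    then show ?thesis
      using lam by (simp add: coeff_cshift[OF n c])
  qed (simp add: coeff_cshift[OF n c])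
  have "?S' = ?\<sigma> ` ?S"
  proof (intro equalityI subsetI)
    fix x
    assume x: "x \<in> ?S'"
    then have "x < n"
      using n c by (auto simp: coeff_cshift split: if_splits)
    define i where "i = (x + n - 1) mod n"
    have "?\<sigma> i = (x + n) mod n"
      using n by (simp add: i_def mod_Suc_eq)
    then have "?\<sigma> i = x"
      using \<open>x < n\<close> by simp
    moreover have "i < n"
      using n by (simp add: i_def)
    ultimately show "x \<in> ?\<sigma> ` ?S"
      using x \<sigma>[of i] by force
  qed (use S \<sigma> in auto)
  moreover have "inj_on ?\<sigma> {..<n}"
    by (rule inj_onI) (simp add: mod_Suc split: if_splits)
  ultimately show ?thesis
    unfolding hweight_def using S by (simp add: card_image inj_on_subset)
qed

section \<open>The irreducible code evaluated at \<beta>\<close>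

(* In the notation of the paper N = tn,
  e = 1 + t\<alpha>, Cs = C_{1+t\<alpha>} and M = m_i; m is M with its coefficients pulled back to F_q,
  and g = (x^n - \<lambda>)/m_i generates the code. *)
locale irreducible_constacyclic_code =
  fixes emb :: "'a::{finite,field} \<Rightarrow> 'b::field"
    and n t \<alpha> :: nat and lam :: 'a and \<zeta> :: 'b
  assumes field_hom_emb: "field_hom emb"
    and n_pos: "0 < n" and t_pos: "0 < t"
    and coprime_n_card: "coprime n CARD('a)"
    and zeta_power_tn: "\<zeta> ^ (t * n) = 1"
    and zeta_order: "\<And>j. 0 < j \<Longrightarrow> j < t * n \<Longrightarrow> \<zeta> ^ j \<noteq> 1"
    and zeta_power_n: "\<zeta> ^ n = emb lam"
begin

sublocale emb: field_hom emb
  by (rule field_hom_emb)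

sublocale emb_poly: map_poly_inj_idom_hom emb ..

definition "N = t * n"
definition "e = 1 + t * \<alpha>"
definition "\<beta> = \<zeta> ^ e"
definition "Cs = cyc_coset CARD('a) N e"
definition "k = card Cs"

lemma N_pos: "0 < N"
  using n_pos t_pos by (simp add: N_def)

lemma zeta_nonzero: "\<zeta> \<noteq> 0"
  using zeta_power_tn N_pos by (auto simp: N_def power_0_left)

lemma zeta_power_mod: "\<zeta> ^ a = \<zeta> ^ (a mod N)"
proof -
  have "\<zeta> ^ a = \<zeta> ^ (N * (a div N) + a mod N)"
    by simp
  also have "\<dots> = (\<zeta> ^ N) ^ (a div N) * \<zeta> ^ (a mod N)"
    by (simp only: power_add power_mult)
  finally show ?thesis
    using zeta_power_tn by (simp add: N_def)
qed

lemma zeta_power_eq_1_iff: "\<zeta> ^ a = 1 \<longleftrightarrow> N dvd a"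
proof -
  have "a mod N < N"
    using N_pos by simp
  then have "\<zeta> ^ (a mod N) = 1 \<longleftrightarrow> a mod N = 0"
    using zeta_order[of "a mod N"] by (auto simp: N_def)
  then show ?thesis
    by (simp add: zeta_power_mod[of a] dvd_eq_mod_eq_0)
qed

lemma zeta_power_eq_iff: "\<zeta> ^ a = \<zeta> ^ b \<longleftrightarrow> [a = b] (mod N)"
proof -
  have *: "\<zeta> ^ a = \<zeta> ^ b \<longleftrightarrow> [a = b] (mod N)" if "a \<le> b" for a b
  proof -
    have "\<zeta> ^ b = \<zeta> ^ a * \<zeta> ^ (b - a)"
      using that by (simp flip: power_add)
    then have "\<zeta> ^ a = \<zeta> ^ b \<longleftrightarrow> \<zeta> ^ (b - a) = 1"
      using zeta_nonzero by auto
    moreover have "[b = a] (mod N) \<longleftrightarrow> N dvd b - a"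
      using that by (rule cong_altdef_nat)
    ultimately show ?thesis
      by (simp add: zeta_power_eq_1_iff cong_sym_eq[of a b])
  qed
  show ?thesis
  proof (cases "a \<le> b")
    case False
    then show ?thesis
      using *[of b a] by (metis cong_sym_eq nat_le_linear)
  qed (rule *)
qed

lemma emb_lam_nonzero: "emb lam \<noteq> 0"
  using zeta_nonzero by (simp flip: zeta_power_n)

lemma lam_nonzero: "lam \<noteq> 0"
  using emb_lam_nonzero by simp

lemma card_cong_1: "[CARD('a) = 1] (mod t)"
proof -
  have "\<zeta> ^ (n * (CARD('a) - 1)) = 1"
    using emb_lam_nonzero finite_field_power_card_minus_one[of lam]
    by (simp add: power_mult zeta_power_n flip: emb.hom_power)
  then have "t * n dvd (CARD('a) - 1) * n"
    by (simp add: zeta_power_eq_1_iff N_def mult.commute)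
  then have "t dvd CARD('a) - 1"
    using n_pos by simp
  then show ?thesis
    using cong_altdef_nat[of 1 "CARD('a)" t] two_le_card_field[where 'a = 'a] by simp
qed

lemma coprime_card_N: "coprime CARD('a) N"
proof -
  have "coprime CARD('a) t"
    using cong_imp_coprime[OF cong_sym[OF card_cong_1]] by simp
  then show ?thesis
    using coprime_n_card by (simp add: N_def coprime_commute)
qed

lemma finite_Cs: "finite Cs"
  using cyc_coset_subset_lessThan[OF N_pos] unfolding Cs_def by (rule finite_subset) simp

lemma k_pos: "0 < k"
  using mod_in_cyc_coset[of e N "CARD('a)"] finite_Cs by (auto simp: k_def Cs_def card_gt_0_iff)

lemma Cs_cong_1:
  assumes "c \<in> Cs"
  shows "[c = 1] (mod t)"
proof -
  have "[c = e] (mod t)"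
    using assms cyc_coset_cong[OF _ _ card_cong_1] by (simp add: Cs_def N_def)
  also have "[e = 1] (mod t)"
    unfolding e_def cong_def by (rule mod_mult_self2)
  finally show ?thesis .
qed

lemma inj_on_zeta_power_Cs: "inj_on (\<lambda>c. \<zeta> ^ c) Cs"
proof (rule inj_onI)
  fix c d
  assume "c \<in> Cs" "d \<in> Cs" "\<zeta> ^ c = \<zeta> ^ d"
  moreover have "Cs \<subseteq> {..<N}"
    unfolding Cs_def by (rule cyc_coset_subset_lessThan[OF N_pos])
  ultimately have "[c = d] (mod N)" "c < N" "d < N"
    using zeta_power_eq_iff by auto
  then show "c = d"
    by (simp add: cong_def)
qed

definition "F = map_poly emb (xn_minus n lam)"

lemma poly_F: "poly F z = z ^ n - emb lam"
  by (simp add: F_def xn_minus_def hom_distribs poly_monom)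

lemma degree_F: "degree F = n"
  using degree_xn_minus[OF n_pos] by (simp add: F_def)

lemma coeff_F_n: "coeff F n = 1"
  using n_pos by (simp add: F_def xn_minus_def coeff_pCons split: nat.split)

lemma F_nonzero: "F \<noteq> 0"
  using coeff_F_n by auto

definition "R = {z. poly F z = 0}"

lemma finite_R: "finite R"
  using poly_roots_finite[OF F_nonzero] by (simp add: R_def)

lemma zeta_power_in_R:
  assumes "[c = 1] (mod t)"
  shows "\<zeta> ^ c \<in> R"
proof -
  have "c * n mod (t * n) = n mod (t * n)"
    using assms by (simp add: mod_mult_mult2 cong_def)
  then have "(\<zeta> ^ c) ^ n = \<zeta> ^ n"
    by (simp add: zeta_power_eq_iff cong_def N_def flip: power_mult)
  then show ?thesis
    by (simp add: R_def poly_F zeta_power_n)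
qed

lemma card_R: "card R = n"
proof (rule antisym)
  show "card R \<le> n"
    using card_poly_roots_bound[OF F_nonzero] by (simp add: R_def degree_F)
  have "inj_on (\<lambda>i. \<zeta> ^ (1 + t * i)) {..<n}"
  proof (rule inj_onI)
    fix i j
    assume ij: "i \<in> {..<n}" "j \<in> {..<n}" and "\<zeta> ^ (1 + t * i) = \<zeta> ^ (1 + t * j)"
    then have "[1 + t * i = 1 + t * j] (mod t * n)"
      using zeta_power_eq_iff unfolding N_def by blast
    then have "[t * i = t * j] (mod t * n)"
      by (simp only: cong_add_lcancel_nat)
    then have "t * (i mod n) = t * (j mod n)"
      by (simp only: cong_def mod_mult_mult1)
    then show "i = j"
      using ij t_pos by simp
  qed
  moreover have "\<zeta> ^ (1 + t * i) \<in> R" for i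
    by (rule zeta_power_in_R) (unfold cong_def, rule mod_mult_self2)
  then have "(\<lambda>i. \<zeta> ^ (1 + t * i)) ` {..<n} \<subseteq> R"
    by (simp add: image_subset_iff)
  ultimately show "n \<le> card R"
    using card_inj_on_le finite_R by fastforce
qed

lemma F_eq_prod: "F = (\<Prod>r\<in>R. [:- r, 1:])"
proof -
  have degree: "degree (\<Prod>r\<in>R. [:- r, 1:]) = n"
    by (simp add: degree_prod_sum_eq card_R)
  moreover have "lead_coeff (\<Prod>r\<in>R. [:- r, 1:]) = 1"
    by (simp add: lead_coeff_prod)
  ultimately show ?thesis
  proof (intro poly_eqI_degree_lead_coeff[of F n _ R])
    fix z
    assume "z \<in> R"
    then have "poly (\<Prod>r\<in>R. [:- r, 1:]) z = 0"
      using finite_R by (auto simp: poly_prod prod_zero_iff)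
    moreover have "poly F z = 0"
      using \<open>z \<in> R\<close> by (simp add: R_def)
    ultimately show "poly F z = poly (\<Prod>r\<in>R. [:- r, 1:]) z"
      by simp
  qed (simp_all add: coeff_F_n card_R degree_F)
qed

definition "M = coset_poly \<zeta> Cs"

lemma M_eq_prod: "M = (\<Prod>r\<in>(\<lambda>c. \<zeta> ^ c) ` Cs. [:- r, 1:])"
  unfolding M_def coset_poly_def by (simp add: prod.reindex[OF inj_on_zeta_power_Cs])

lemma zeta_power_Cs_subset_R: "(\<lambda>c. \<zeta> ^ c) ` Cs \<subseteq> R"
  using Cs_cong_1 zeta_power_in_R by blast

definition "cofactor = (\<Prod>r\<in>R - (\<lambda>c. \<zeta> ^ c) ` Cs. [:- r, 1:])"

lemma F_eq_cofactor_mult: "F = cofactor * M"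
  unfolding F_eq_prod cofactor_def M_eq_prod
  by (rule prod.subset_diff[OF zeta_power_Cs_subset_R finite_R])

lemma beta_in_zeta_power_Cs: "\<beta> \<in> (\<lambda>c. \<zeta> ^ c) ` Cs"
proof -
  have "\<beta> = \<zeta> ^ (e mod N)"
    by (simp add: \<beta>_def flip: zeta_power_mod)
  moreover have "e mod N \<in> Cs"
    unfolding Cs_def by (rule mod_in_cyc_coset)
  ultimately show ?thesis
    by blast
qed

lemma poly_cofactor_beta: "poly cofactor \<beta> \<noteq> 0"
  unfolding cofactor_def using beta_in_zeta_power_Cs finite_R by (simp add: poly_prod prod_zero_iff)

lemma poly_F_beta: "poly F \<beta> = 0"
  using beta_in_zeta_power_Cs zeta_power_Cs_subset_R by (auto simp: R_def)

lemma map_poly_frobenius_M: "map_poly (\<lambda>y. y ^ CARD('a)) M = M"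
proof -
  interpret frob: comm_ring_hom "\<lambda>y::'b. y ^ CARD('a)"
    by (rule frobenius_comm_ring_hom[OF field_hom_emb])
  interpret frob_poly: map_poly_comm_ring_hom "\<lambda>y::'b. y ^ CARD('a)" ..
  have "map_poly (\<lambda>y. y ^ CARD('a)) [:- (\<zeta> ^ c), 1:] = [:- (\<zeta> ^ (c * CARD('a) mod N)), 1:]" for c
    by (simp add: hom_distribs frob.hom_uminus power_mult flip: zeta_power_mod)
  then have "map_poly (\<lambda>y. y ^ CARD('a)) M = (\<Prod>c\<in>Cs. [:- (\<zeta> ^ (c * CARD('a) mod N)), 1:])"
    unfolding M_def coset_poly_def by (simp add: frob_poly.hom_prod)
  also have "\<dots> = M"
    unfolding M_def coset_poly_def Cs_def
    by (rule prod.reindex_bij_betw[OF bij_betw_cyc_coset_mult[OF coprime_card_N N_pos]])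
  finally show ?thesis .
qed

lemma coeff_M_in_range: "coeff M i \<in> range emb"
proof -
  have "coeff M i ^ CARD('a) = coeff M i"
    using map_poly_frobenius_M two_le_card_field[where 'a = 'a]
    by (metis coeff_map_poly power_0_left not_numeral_le_zero)
  then show ?thesis
    by (simp add: range_field_hom[OF field_hom_emb])
qed

lemma M_nonzero: "M \<noteq> 0"
  unfolding M_eq_prod by (simp add: prod_zero_iff finite_Cs)

definition "m = map_poly (inv_into UNIV emb) M"

lemma map_poly_emb_m: "map_poly emb m = M"
proof (rule poly_eqI)
  fix i
  have "inv_into UNIV emb 0 = 0"
    by (metis emb.hom_zero emb.inv_f_f)
  then show "coeff (map_poly emb m) i = coeff M i"
    using coeff_M_in_range[of i] by (simp add: m_def coeff_map_poly f_inv_into_f)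
qed

definition "g = xn_minus n lam div m"

lemma map_poly_emb_g: "map_poly emb g = cofactor"
  using F_eq_cofactor_mult M_nonzero by (simp add: g_def hom_distribs map_poly_emb_m flip: F_def)

lemma xn_minus_eq_mult: "xn_minus n lam = m * g"
proof -
  have "map_poly emb (xn_minus n lam) = map_poly emb (m * g)"
    using F_eq_cofactor_mult by (simp add: F_def map_poly_emb_g map_poly_emb_m hom_distribs mult.commute)
  then show ?thesis
    by (simp only: emb_poly.eq_iff)
qed

lemma degree_m: "degree m = k"
proof -
  have "degree M = k"
    unfolding M_eq_prod k_def by (simp add: degree_prod_sum_eq card_image[OF inj_on_zeta_power_Cs] finite_Cs)
  then show ?thesis
    by (simp flip: map_poly_emb_m)
qed

lemma m_nonzero: "m \<noteq> 0"
  using M_nonzero by (auto simp flip: map_poly_emb_m)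

lemma g_nonzero: "g \<noteq> 0"
  using F_nonzero F_eq_cofactor_mult by (auto simp flip: map_poly_emb_g)

definition "code = irr_code emb n lam \<zeta> Cs"

lemma code_iff: "c \<in> code \<longleftrightarrow> (\<exists>a. c = a * g mod xn_minus n lam)"
proof -
  have "map_poly emb (xn_minus n lam) div coset_poly \<zeta> Cs = map_poly emb g"
    using F_eq_cofactor_mult M_nonzero by (simp add: map_poly_emb_g flip: F_def M_def)
  moreover have "map_poly emb a * map_poly emb g mod map_poly emb (xn_minus n lam)
      = map_poly emb (a * g mod xn_minus n lam)" for a
    by (simp add: hom_distribs)
  ultimately show ?thesis
    unfolding code_def irr_code_def by (simp only: emb_poly.eq_iff mem_Collect_eq)
qed

lemma code_eq_image: "code = (\<lambda>b. b * g) ` {b. degree b < k}"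
proof -
  have mod_eq: "a * g mod xn_minus n lam = (a mod m) * g" for a
    unfolding xn_minus_eq_mult by (rule mod_mult_mult2)
  have "c \<in> code \<longleftrightarrow> (\<exists>b. degree b < k \<and> c = b * g)" for c
  proof
    assume "c \<in> code"
    then obtain a where "c = (a mod m) * g"
      using code_iff mod_eq by auto
    moreover have "degree (a mod m) < k"
      using degree_mod_less'[OF m_nonzero, of a] k_pos degree_m by (cases "a mod m = 0") auto
    ultimately show "\<exists>b. degree b < k \<and> c = b * g"
      by blast
  next
    assume "\<exists>b. degree b < k \<and> c = b * g"
    then obtain b where "degree b < k" "c = b * g"
      by blast
    then have "c = b * g mod xn_minus n lam"
      using degree_m by (simp add: mod_eq mod_poly_less)
    then show "c \<in> code"
      using code_iff by blast
  qed
  then show ?thesis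
    by blast
qed

lemma card_code: "card code = CARD('a) ^ k"
proof -
  have "inj_on (\<lambda>b. b * g) {b. degree b < k}"
    using g_nonzero by (auto intro: inj_onI)
  then show ?thesis
    by (simp add: code_eq_image card_image card_degree_less[OF k_pos])
qed

lemma finite_code: "finite code"
  by (rule card_ge_0_finite) (simp add: card_code)

lemma zero_in_code: "0 \<in> code"
  unfolding code_iff by (intro exI[of _ 0]) simp

lemma degree_code:
  assumes "c \<in> code"
  shows "degree c < n"
proof (cases "c = 0")
  case False
  obtain a where "c = a * g mod xn_minus n lam"
    using assms code_iff by blast
  moreover have "xn_minus n lam \<noteq> 0"
    using F_nonzero by (auto simp: F_def)
  ultimately show ?thesis
    using False degree_mod_less' degree_xn_minus[OF n_pos] by metis
qed (simp add: n_pos)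

lemma smult_in_code: "c \<in> code \<Longrightarrow> smult b c \<in> code"
  unfolding code_iff by (metis mod_smult_left mult_smult_left)

lemma cshift_in_code: "c \<in> code \<Longrightarrow> cshift n lam c \<in> code"
  unfolding code_iff cshift_def by (metis mod_mult_right_eq mult.assoc)

lemma zeta_power_Cs_eq:
  assumes "c \<in> Cs"
  obtains h where "\<zeta> ^ c = \<beta> ^ CARD('a) ^ h"
proof -
  obtain h where "c = e * CARD('a) ^ h mod N"
    using assms unfolding Cs_def cyc_coset_def by blast
  then have "\<zeta> ^ c = \<beta> ^ CARD('a) ^ h"
    by (simp add: \<beta>_def power_mult flip: zeta_power_mod)
  then show ?thesis
    by (rule that)
qed

lemma eq_0_if_degree_less_beta_root:
  assumes "degree b < k" "poly (map_poly emb b) \<beta> = 0"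
  shows "b = 0"
proof -
  have "poly (map_poly emb b) z = poly 0 z" if z: "z \<in> (\<lambda>c. \<zeta> ^ c) ` Cs" for z
  proof -
    obtain c where "c \<in> Cs" "z = \<zeta> ^ c"
      using z by blast
    then obtain h where "z = \<beta> ^ CARD('a) ^ h"
      using zeta_power_Cs_eq by metis
    then show ?thesis
      using assms(2) by (simp add: poly_map_poly_frobenius_power[OF field_hom_emb])
  qed
  moreover have "degree (map_poly emb b) < card ((\<lambda>c. \<zeta> ^ c) ` Cs)"
    "degree (0 :: 'b poly) < card ((\<lambda>c. \<zeta> ^ c) ` Cs)"
    using assms(1) k_pos by (simp_all add: k_def card_image[OF inj_on_zeta_power_Cs])
  ultimately have "map_poly emb b = 0"
    by (rule poly_eqI_degree)
  then show ?thesis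
    by simp
qed

definition "ev c = poly (map_poly emb c) \<beta>"

lemma ev_mod_xn_minus: "ev (p mod xn_minus n lam) = ev p"
proof -
  let ?P = "map_poly emb p"
  have "poly ?P \<beta> = poly (?P div F * F + ?P mod F) \<beta>"
    by (simp only: div_mult_mod_eq)
  also have "\<dots> = poly (?P mod F) \<beta>"
    by (simp only: poly_add poly_mult poly_F_beta mult_zero_right add_0)
  finally show ?thesis
    by (simp add: ev_def hom_distribs F_def)
qed

lemma ev_cshift: "ev (cshift n lam c) = \<beta> * ev c"
  unfolding cshift_def ev_mod_xn_minus by (simp add: ev_def hom_distribs poly_monom)

lemma ev_smult: "ev (smult b c) = emb b * ev c"
  by (simp add: ev_def hom_distribs)

lemma ev_cshift_power: "ev ((cshift n lam ^^ j) c) = \<beta> ^ j * ev c"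
  by (induction j) (simp_all add: ev_cshift)

lemma cshift_power_in_code: "c \<in> code \<Longrightarrow> (cshift n lam ^^ j) c \<in> code"
  by (induction j) (simp_all add: cshift_in_code)

lemma inj_on_ev_code: "inj_on ev code"
proof (rule inj_onI)
  fix c d
  assume "c \<in> code" "d \<in> code" and ev_eq: "ev c = ev d"
  then obtain b b' where c: "c = b * g" "degree b < k" and d: "d = b' * g" "degree b' < k"
    by (auto simp: code_eq_image)
  have "ev (b * g) = poly (map_poly emb b) \<beta> * poly cofactor \<beta>" for b
    by (simp add: ev_def hom_distribs map_poly_emb_g)
  then have "poly (map_poly emb (b - b')) \<beta> = 0"
    using ev_eq poly_cofactor_beta by (simp add: c d hom_distribs)
  moreover have "degree (b - b') < k"
    using c d degree_diff_le_max[of b b'] by simp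
  ultimately have "b - b' = 0"
    using eq_0_if_degree_less_beta_root by blast
  then show "c = d"
    by (simp add: c d)
qed

section \<open>Orbits of <\<rho>, M>\<close>

lemma beta_nonzero: "\<beta> \<noteq> 0"
  using zeta_nonzero by (simp add: \<beta>_def)

lemma beta_power_mod: "\<beta> ^ a = \<beta> ^ (a mod N)"
  using zeta_power_mod[of "e * a"] zeta_power_mod[of "e * (a mod N)"]
  by (simp add: \<beta>_def mod_mult_right_eq flip: power_mult)

lemma beta_power_in_range_iff: "\<beta> ^ i \<in> range emb \<longleftrightarrow> N dvd i * ((CARD('a) - 1) * e)"
proof -
  have "\<beta> ^ i \<in> range emb \<longleftrightarrow> (\<beta> ^ i) ^ CARD('a) = \<beta> ^ i"
    by (simp add: range_field_hom[OF field_hom_emb])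
  also have "\<dots> \<longleftrightarrow> (\<beta> ^ i) ^ (CARD('a) - 1) = 1"
    using beta_nonzero power_eq_if[of "\<beta> ^ i" "CARD('a)"] by auto
  also have "\<dots> \<longleftrightarrow> N dvd i * ((CARD('a) - 1) * e)"
    by (simp add: \<beta>_def zeta_power_eq_1_iff mult_ac flip: power_mult)
  finally show ?thesis .
qed

definition "H = {\<beta> ^ j * emb b | j b. b \<noteq> 0}"

lemma H_nonzero: "h \<in> H \<Longrightarrow> h \<noteq> 0"
  using beta_nonzero by (auto simp: H_def)

lemma H_mult_closed:
  assumes "h \<in> H" "h' \<in> H"
  shows "h * h' \<in> H"
proof -
  obtain j b j' b' where "h = \<beta> ^ j * emb b" "h' = \<beta> ^ j' * emb b'" "b \<noteq> 0" "b' \<noteq> 0"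
    using assms by (auto simp: H_def)
  then have "h * h' = \<beta> ^ (j + j') * emb (b * b')" "b * b' \<noteq> 0"
    by (simp_all add: power_add hom_distribs mult_ac)
  then show ?thesis
    unfolding H_def by blast
qed

lemma H_inverse_closed:
  assumes "h \<in> H"
  shows "inverse h \<in> H"
proof -
  obtain j b where h: "h = \<beta> ^ j * emb b" "b \<noteq> 0"
    using assms by (auto simp: H_def)
  have "\<beta> ^ j * \<beta> ^ (j * (N - 1)) = 1"
    using N_pos beta_power_mod[of "j * N"] by (simp add: mult_ac flip: power_add mult_Suc_right)
  then have "inverse h = \<beta> ^ (j * (N - 1)) * emb (inverse b)"
    using h by (simp add: hom_distribs inverse_unique mult.commute)
  moreover have "inverse b \<noteq> 0"
    using h by simp
  ultimately show ?thesis
    unfolding H_def by blast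
qed

lemma card_beta_powers_in_range: "card {i. i < N \<and> \<beta> ^ i \<in> range emb} = gcd ((CARD('a) - 1) * e) N"
  unfolding beta_power_in_range_iff by (rule card_lessThan_dvd_mult[OF N_pos])

definition "H_fiber y = {x \<in> {..<N} \<times> {b. b \<noteq> 0}. (\<lambda>(j, b). \<beta> ^ j * emb b) x = y}"

lemma fst_H_fiber:
  assumes j0: "j0 < N" and b0: "b0 \<noteq> 0"
  shows "fst ` H_fiber (\<beta> ^ j0 * emb b0) = (\<lambda>i. (i + j0) mod N) ` {i. i < N \<and> \<beta> ^ i \<in> range emb}"
proof -
  have shift: "\<beta> ^ ((i + j0) mod N) = \<beta> ^ i * \<beta> ^ j0" for i
    by (simp add: power_add flip: beta_power_mod)
  show ?thesis
  proof (intro equalityI subsetI)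
    fix j
    assume "j \<in> fst ` H_fiber (\<beta> ^ j0 * emb b0)"
    then obtain b where jb: "j < N" "b \<noteq> 0" "\<beta> ^ j * emb b = \<beta> ^ j0 * emb b0"
      by (auto simp: H_fiber_def)
    define i where "i = (j + (N - j0)) mod N"
    have "(i + j0) mod N = (j + N) mod N"
      using j0 by (simp add: i_def mod_add_left_eq)
    then have ij: "(i + j0) mod N = j"
      using jb by simp
    then have "\<beta> ^ i * \<beta> ^ j0 * emb b = \<beta> ^ j0 * emb b0"
      using jb shift[of i] by simp
    then have "\<beta> ^ i = emb (b0 / b)"
      using jb beta_nonzero by (simp add: hom_distribs field_simps)
    moreover have "i < N"
      using N_pos by (simp add: i_def)
    ultimately show "j \<in> (\<lambda>i. (i + j0) mod N) ` {i. i < N \<and> \<beta> ^ i \<in> range emb}"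
      using ij by force
  next
    fix j
    assume "j \<in> (\<lambda>i. (i + j0) mod N) ` {i. i < N \<and> \<beta> ^ i \<in> range emb}"
    then obtain i a where i: "j = (i + j0) mod N" "\<beta> ^ i = emb a"
      by auto
    then have "a \<noteq> 0"
      using beta_nonzero by auto
    then have "\<beta> ^ j * emb (b0 / a) = \<beta> ^ j0 * emb b0" "b0 / a \<noteq> 0" "j < N"
      using i shift[of i] b0 N_pos by (simp_all add: hom_distribs field_simps)
    then have "(j, b0 / a) \<in> H_fiber (\<beta> ^ j0 * emb b0)"
      by (simp add: H_fiber_def)
    then show "j \<in> fst ` H_fiber (\<beta> ^ j0 * emb b0)"
      by (rule rev_image_eqI) simp
  qed
qed

lemma card_H_fiber:
  assumes "j0 < N" and "b0 \<noteq> 0"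
  shows "card (H_fiber (\<beta> ^ j0 * emb b0)) = gcd ((CARD('a) - 1) * e) N"
proof -
  have inj_fst: "inj_on fst (H_fiber y)" for y
  proof (rule inj_onI)
    fix x x'
    assume "x \<in> H_fiber y" "x' \<in> H_fiber y" and fst_eq: "fst x = fst x'"
    then have "\<beta> ^ fst x * emb (snd x) = \<beta> ^ fst x * emb (snd x')"
      by (auto simp: H_fiber_def)
    then have "snd x = snd x'"
      using beta_nonzero by simp
    then show "x = x'"
      using fst_eq by (simp add: prod_eq_iff)
  qed
  have inj_shift: "inj_on (\<lambda>i. (i + j0) mod N) {i. i < N \<and> \<beta> ^ i \<in> range emb}"
  proof (rule inj_onI)
    fix i i'
    assume "i \<in> {i. i < N \<and> \<beta> ^ i \<in> range emb}" "i' \<in> {i. i < N \<and> \<beta> ^ i \<in> range emb}"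
      and "(i + j0) mod N = (i' + j0) mod N"
    then have "[i = i'] (mod N)" "i < N" "i' < N"
      by (simp_all add: cong_def[symmetric] cong_add_rcancel_nat)
    then show "i = i'"
      by (simp add: cong_def)
  qed
  have "card (H_fiber (\<beta> ^ j0 * emb b0)) = card (fst ` H_fiber (\<beta> ^ j0 * emb b0))"
    using inj_fst by (rule card_image[symmetric])
  also have "\<dots> = card {i. i < N \<and> \<beta> ^ i \<in> range emb}"
    unfolding fst_H_fiber[OF assms] using inj_shift by (rule card_image)
  finally show ?thesis
    by (simp only: card_beta_powers_in_range)
qed

lemma card_H: "card H * gcd ((CARD('a) - 1) * e) N = N * (CARD('a) - 1)"
proof -
  let ?D = "{..<N} \<times> {b :: 'a. b \<noteq> 0}"
  let ?\<mu> = "\<lambda>(j, b). \<beta> ^ j * emb b"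
  have "H = ?\<mu> ` ?D"
  proof (intro equalityI subsetI)
    fix h
    assume "h \<in> H"
    then obtain j b where "h = \<beta> ^ j * emb b" "b \<noteq> 0"
      by (auto simp: H_def)
    then have "h = ?\<mu> (j mod N, b)" "(j mod N, b) \<in> ?D"
      using N_pos by (simp_all add: beta_power_mod[of j])
    then show "h \<in> ?\<mu> ` ?D"
      by (rule image_eqI)
  qed (auto simp: H_def)
  moreover have "card ?D = N * (CARD('a) - 1)"
    by (simp add: card_cartesian_product Collect_neg_eq Compl_eq_Diff_UNIV card_Diff_singleton)
  moreover have "card ?D = card (?\<mu> ` ?D) * gcd ((CARD('a) - 1) * e) N"
    by (rule card_eq_card_image_mult_fiber) (auto simp: card_H_fiber simp flip: H_fiber_def)
  ultimately show ?thesis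
    by simp
qed

lemma rhoM_orbit_subset_code: "c \<in> code \<Longrightarrow> rhoM_orbit n lam c \<subseteq> code"
  unfolding rhoM_orbit_def using cshift_power_in_code smult_in_code by blast

lemma ev_rhoM_orbit: "ev ` rhoM_orbit n lam c = (\<lambda>h. h * ev c) ` H"
proof (intro equalityI subsetI)
  fix y
  assume "y \<in> ev ` rhoM_orbit n lam c"
  then obtain j b where "b \<noteq> 0" "y = ev ((cshift n lam ^^ j) (smult b c))"
    unfolding rhoM_orbit_def by blast
  then have "y = (\<beta> ^ j * emb b) * ev c" "\<beta> ^ j * emb b \<in> H"
    by (auto simp: ev_cshift_power ev_smult H_def)
  then show "y \<in> (\<lambda>h. h * ev c) ` H"
    by (rule image_eqI)
next
  fix y
  assume "y \<in> (\<lambda>h. h * ev c) ` H"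
  then obtain j b where "b \<noteq> 0" "y = \<beta> ^ j * emb b * ev c"
    unfolding H_def by blast
  then have "y = ev ((cshift n lam ^^ j) (smult b c))" "(cshift n lam ^^ j) (smult b c) \<in> rhoM_orbit n lam c"
    by (auto simp: ev_cshift_power ev_smult rhoM_orbit_def)
  then show "y \<in> ev ` rhoM_orbit n lam c"
    by (rule image_eqI)
qed

lemma rhoM_orbit_eq_ev_preimage:
  assumes "c \<in> code"
  shows "rhoM_orbit n lam c = {d \<in> code. ev d \<in> (\<lambda>h. h * ev c) ` H}"
proof (intro equalityI subsetI)
  fix d
  assume "d \<in> rhoM_orbit n lam c"
  then show "d \<in> {d \<in> code. ev d \<in> (\<lambda>h. h * ev c) ` H}"
    using rhoM_orbit_subset_code[OF assms] ev_rhoM_orbit by blast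
next
  fix d
  assume d: "d \<in> {d \<in> code. ev d \<in> (\<lambda>h. h * ev c) ` H}"
  then have "ev d \<in> ev ` rhoM_orbit n lam c"
    by (simp add: ev_rhoM_orbit)
  then obtain d' where d': "d' \<in> rhoM_orbit n lam c" "ev d = ev d'"
    by blast
  then have "d = d'"
    using d rhoM_orbit_subset_code[OF assms] by (intro inj_onD[OF inj_on_ev_code]) auto
  then show "d \<in> rhoM_orbit n lam c"
    using d' by simp
qed

lemma ev_nonzero:
  assumes "c \<in> code" "c \<noteq> 0"
  shows "ev c \<noteq> 0"
proof
  assume "ev c = 0"
  then have "ev c = ev 0"
    by (simp add: ev_def)
  then have "c = 0"
    using assms(1) zero_in_code by (rule inj_onD[OF inj_on_ev_code])
  then show False
    using assms(2) by simp
qed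

lemma card_rhoM_orbit:
  assumes "c \<in> code" "c \<noteq> 0"
  shows "card (rhoM_orbit n lam c) = card H"
proof -
  have "card (rhoM_orbit n lam c) = card (ev ` rhoM_orbit n lam c)"
    using inj_on_subset[OF inj_on_ev_code rhoM_orbit_subset_code[OF assms(1)]] by (simp add: card_image)
  also have "\<dots> = card H"
    unfolding ev_rhoM_orbit using ev_nonzero[OF assms] by (simp add: card_image inj_on_def)
  finally show ?thesis .
qed

lemma rhoM_orbit_eq_if_mem:
  assumes "c \<in> code" "d \<in> rhoM_orbit n lam c"
  shows "rhoM_orbit n lam d = rhoM_orbit n lam c"
proof -
  have "d \<in> code"
    using assms rhoM_orbit_subset_code by blast
  obtain h0 where h0: "h0 \<in> H" "ev d = h0 * ev c"
    using assms(2) ev_rhoM_orbit by blast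
  have "(\<lambda>h. h * h0) ` H = H"
  proof (intro equalityI subsetI)
    fix h
    assume "h \<in> H"
    then have "h * inverse h0 \<in> H"
      using H_mult_closed H_inverse_closed h0(1) by blast
    moreover have "h = h * inverse h0 * h0"
      using H_nonzero[OF h0(1)] by simp
    ultimately show "h \<in> (\<lambda>h. h * h0) ` H"
      by (rule rev_image_eqI)
  qed (use h0 H_mult_closed in auto)
  moreover have "(\<lambda>h. h * ev d) ` H = (\<lambda>h. h * ev c) ` (\<lambda>h. h * h0) ` H"
    by (simp add: image_image h0(2) mult.assoc)
  ultimately have "(\<lambda>h. h * ev d) ` H = (\<lambda>h. h * ev c) ` H"
    by simp
  then show ?thesis
    using rhoM_orbit_eq_ev_preimage assms(1) \<open>d \<in> code\<close> by simp
qed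

lemma hweight_rhoM_orbit:
  assumes "c \<in> code" "d \<in> rhoM_orbit n lam c"
  shows "hweight d = hweight c"
proof -
  obtain j b where d: "d = (cshift n lam ^^ j) (smult b c)" "b \<noteq> 0"
    using assms(2) unfolding rhoM_orbit_def by blast
  have "smult b c \<in> code"
    using assms(1) by (rule smult_in_code)
  then have "hweight ((cshift n lam ^^ j) (smult b c)) = hweight (smult b c)"
  proof (induction j)
    case (Suc j)
    then show ?case
      using hweight_cshift[OF lam_nonzero n_pos degree_code[OF cshift_power_in_code]] by simp
  qed simp
  then show ?thesis
    using d hweight_smult by simp
qed

lemma rhoM_orbit_subset_nonzero_code:
  assumes "c \<in> code" "c \<noteq> 0"
  shows "rhoM_orbit n lam c \<subseteq> code - {0}"
proof
  fix d
  assume d: "d \<in> rhoM_orbit n lam c"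
  then obtain h where "h \<in> H" "ev d = h * ev c"
    using ev_rhoM_orbit by blast
  then have "ev d \<noteq> 0"
    using H_nonzero ev_nonzero[OF assms] by simp
  then show "d \<in> code - {0}"
    using d rhoM_orbit_subset_code[OF assms(1)] by (auto simp: ev_def)
qed

lemma Union_rhoM_orbit_code: "\<Union> (rhoM_orbit n lam ` (code - {0})) = code - {0}"
proof (intro equalityI subsetI)
  fix d
  assume "d \<in> \<Union> (rhoM_orbit n lam ` (code - {0}))"
  then obtain c where "c \<in> code - {0}" "d \<in> rhoM_orbit n lam c"
    by blast
  then show "d \<in> code - {0}"
    using rhoM_orbit_subset_nonzero_code[of c] by auto
next
  fix d
  assume "d \<in> code - {0}"
  then show "d \<in> \<Union> (rhoM_orbit n lam ` (code - {0}))"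
    using self_in_rhoM_orbit[of d] by blast
qed

lemma rhoM_orbits_disjoint:
  assumes "c1 \<in> code" "c2 \<in> code" "rhoM_orbit n lam c1 \<noteq> rhoM_orbit n lam c2"
  shows "rhoM_orbit n lam c1 \<inter> rhoM_orbit n lam c2 = {}"
proof (rule ccontr)
  assume "rhoM_orbit n lam c1 \<inter> rhoM_orbit n lam c2 \<noteq> {}"
  then obtain d where d: "d \<in> rhoM_orbit n lam c1" "d \<in> rhoM_orbit n lam c2"
    by blast
  show False
    using assms(3) rhoM_orbit_eq_if_mem[OF assms(1) d(1)] rhoM_orbit_eq_if_mem[OF assms(2) d(2)]
    by simp
qed

lemma card_H_mult_num_orbits: "card H * num_orbits n lam (code - {0}) = CARD('a) ^ k - 1"
proof -
  have "card H * card (rhoM_orbit n lam ` (code - {0})) = card (\<Union> (rhoM_orbit n lam ` (code - {0})))"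
  proof (rule card_partition)
    show "finite (rhoM_orbit n lam ` (code - {0}))" "finite (\<Union> (rhoM_orbit n lam ` (code - {0})))"
      using finite_code by (simp_all add: Union_rhoM_orbit_code)
    show "card S = card H" if "S \<in> rhoM_orbit n lam ` (code - {0})" for S
      using that card_rhoM_orbit by auto
    show "S1 \<inter> S2 = {}"
      if S: "S1 \<in> rhoM_orbit n lam ` (code - {0})" "S2 \<in> rhoM_orbit n lam ` (code - {0})" "S1 \<noteq> S2"
      for S1 S2
    proof -
      obtain c1 c2 where "c1 \<in> code" "c2 \<in> code" "S1 = rhoM_orbit n lam c1" "S2 = rhoM_orbit n lam c2"
        using S(1,2) by blast
      then show ?thesis
        using S(3) rhoM_orbits_disjoint by simp
    qed
  qed
  also have "\<dots> = CARD('a) ^ k - 1"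
    using zero_in_code by (simp add: Union_rhoM_orbit_code card_Diff_singleton card_code)
  finally show ?thesis
    by (simp add: num_orbits_def)
qed

theorem num_orbits_code:
  "real (num_orbits n lam (code - {0})) =
    real ((CARD('a) ^ k - 1) * gcd ((CARD('a) - 1) * e) N) / real ((CARD('a) - 1) * N)"
proof -
  have "(CARD('a) - 1) * N = card H * gcd ((CARD('a) - 1) * e) N"
    using card_H by (simp only: mult.commute)
  then have "num_orbits n lam (code - {0}) * ((CARD('a) - 1) * N)
      = num_orbits n lam (code - {0}) * (card H * gcd ((CARD('a) - 1) * e) N)"
    by (simp only:)
  also have "\<dots> = (card H * num_orbits n lam (code - {0})) * gcd ((CARD('a) - 1) * e) N"
    by (simp only: mult_ac)
  also have "\<dots> = (CARD('a) ^ k - 1) * gcd ((CARD('a) - 1) * e) N"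
    by (simp only: card_H_mult_num_orbits)
  finally have "real (num_orbits n lam (code - {0})) * real ((CARD('a) - 1) * N)
      = real ((CARD('a) ^ k - 1) * gcd ((CARD('a) - 1) * e) N)"
    by (simp only: of_nat_mult[symmetric])
  moreover have "(CARD('a) - 1) * N \<noteq> 0"
    using two_le_card_field[where 'a = 'a] N_pos by simp
  ultimately show ?thesis
    by (simp add: eq_divide_eq)
qed

lemma rhoM_orbit_classes:
  shows "finite (code - {0})"
    and "\<And>c. c \<in> code - {0} \<Longrightarrow> c \<in> rhoM_orbit n lam c"
    and "\<And>c d. c \<in> code - {0} \<Longrightarrow> d \<in> rhoM_orbit n lam c \<Longrightarrow> hweight d = hweight c"
    and "\<And>c d. c \<in> code - {0} \<Longrightarrow> d \<in> code - {0} \<Longrightarrow> d \<in> rhoM_orbit n lam c \<Longrightarrow>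
      rhoM_orbit n lam d = rhoM_orbit n lam c"
proof -
  show "finite (code - {0})"
    using finite_code by (rule finite_Diff)
  show "c \<in> rhoM_orbit n lam c" for c
    by (rule self_in_rhoM_orbit)
  show "hweight d = hweight c" if "c \<in> code - {0}" "d \<in> rhoM_orbit n lam c" for c d
    using that by (simp add: hweight_rhoM_orbit)
  show "rhoM_orbit n lam d = rhoM_orbit n lam c"
    if "c \<in> code - {0}" "d \<in> code - {0}" "d \<in> rhoM_orbit n lam c" for c d
    using that by (simp add: rhoM_orbit_eq_if_mem)
qed

theorem card_hweight_le_num_orbits: "card (hweight ` (code - {0})) \<le> num_orbits n lam (code - {0})"
  unfolding num_orbits_def using rhoM_orbit_classes(1-3) by (rule card_image_le_card_classes)

theorem card_hweight_eq_num_orbits_iff: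
  "card (hweight ` (code - {0})) = num_orbits n lam (code - {0}) \<longleftrightarrow>
    (\<forall>c\<in>code - {0}. \<forall>d\<in>code - {0}. hweight c = hweight d \<longrightarrow> d \<in> rhoM_orbit n lam c)"
  unfolding num_orbits_def using rhoM_orbit_classes by (rule card_image_eq_card_classes_iff)

end

theorem lemma5:
  fixes emb :: "'a::{finite,field} \<Rightarrow> 'b::{finite,field}"
    and n t \<alpha> :: nat and lam :: 'a and \<zeta> :: 'b
  defines "q \<equiv> card (UNIV :: 'a set)"
  defines "Cset \<equiv> cyc_coset q (t * n) (1 + t * \<alpha>)"
  defines "k \<equiv> card Cset"
  defines "Code \<equiv> irr_code emb n lam \<zeta> Cset"
  assumes n_pos: "n > 0" and cop: "coprime n q"
    and lam_nz: "lam \<noteq> 0"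
    and t_pos: "t > 0" and lam_t: "lam ^ t = 1"
    and t_ord: "\<forall>j. 0 < j \<and> j < t \<longrightarrow> lam ^ j \<noteq> 1"
    and emb_inj: "inj emb"
    and emb_add: "\<forall>x y. emb (x + y) = emb x + emb y"
    and emb_mult: "\<forall>x y. emb (x * y) = emb x * emb y"
    and emb_one: "emb 1 = 1"
    and zeta_tn: "\<zeta> ^ (t * n) = 1"
    and zeta_ord: "\<forall>j. 0 < j \<and> j < t * n \<longrightarrow> \<zeta> ^ j \<noteq> 1"
    and zeta_n: "\<zeta> ^ n = emb lam"
    and alpha_lt: "\<alpha> < n"
  shows "real (num_orbits n lam (Code - {0})) =
           real ((q ^ k - 1) * gcd ((q - 1) * (1 + t * \<alpha>)) (t * n)) / real ((q - 1) * t * n)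
       \<and> card (hweight ` (Code - {0})) \<le> num_orbits n lam (Code - {0})
       \<and> (card (hweight ` (Code - {0})) = num_orbits n lam (Code - {0}) \<longleftrightarrow>
            (\<forall>c1\<in>Code - {0}. \<forall>c2\<in>Code - {0}. hweight c1 = hweight c2 \<longrightarrow>
               (\<exists>j b. b \<noteq> 0 \<and> (cshift n lam ^^ j) (smult b c1) = c2)))"
proof -
  have "emb 0 = 0"
    using emb_add by (metis add_cancel_right_right)
  then have "field_hom emb"
    using emb_add emb_mult emb_one by unfold_locales simp_all
  then interpret C: irreducible_constacyclic_code emb n t \<alpha> lam \<zeta>
    using n_pos t_pos cop zeta_tn zeta_ord zeta_n
    by (intro irreducible_constacyclic_code.intro) (simp_all add: q_def)
  have Cs: "C.Cs = Cset"
    by (simp add: C.Cs_def Cset_def q_def C.N_def C.e_def)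
  have code: "C.code = Code" and k: "C.k = k"
    by (simp_all add: C.code_def Code_def C.k_def k_def Cs)
  have gcd: "gcd ((CARD('a) - 1) * C.e) C.N = gcd ((q - 1) * (1 + t * \<alpha>)) (t * n)"
    and denominator: "(CARD('a) - 1) * C.N = (q - 1) * t * n"
    by (simp_all add: C.e_def C.N_def q_def mult.assoc)
  show ?thesis
    using C.num_orbits_code C.card_hweight_le_num_orbits C.card_hweight_eq_num_orbits_iff
    unfolding code k gcd denominator mem_rhoM_orbit_iff q_def by blast
qed

end
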